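(* Let $k \geq 1$ and let $P \in \mathcal{A}_{2k}$. If $P$ is convex, then $k \leq 2$.
   Context: A polygon $P = \{p_1, \ldots, p_n\}$ in the plane is a cyclic sequence of points (vertices), joined by edges $p_i p_{i+1}$, with indices taken modulo $n$. A polygon is convex if it is a simple closed polygon whose boundary bounds a convex region. Alternating polygons: fix coordinates in the plane. Let $\mathbf{x} = (x_1, \ldots, x_k)$ and $\mathbf{y} = (y_1, \ldots, y_k)$ be vectors in $\mathbb{R}^k$ with $x_i > 0$, $y_i > 0$ for all $i$, and $x_i \neq x_j$, $y_i \neq y_j$ for all $i \neq j$. Let $\sigma = (\sigma_1, \ldots, \sigma_{2k}) \in \{-1, +1\}^{2k}$. The polygon $A(\mathbf{x}, \mathbf{y}, \sigma) = \{p_1, \ldots, p_{2k}\}$ is defined by $p_{2i+1} = (\sigma_{2i+1} x_{i+1}, 0)$ for $i = 0, \ldots, k-1$, and $p_{2i} = (0, \sigma_{2i} y_i)$ for $i = 1, \ldots, k$. The family $\mathcal{A}_{2k}$ consists of all polygons $A(\mathbf{x}, \mathbf{y}, \sigma)$ for all such $\mathbf{x}, \mathbf{y}, \sigma$. *)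

theory Defs
  imports "HOL-Analysis.Analysis"
begin

type_synonym point = "real \<times> real"

fun polygonal_path :: "point list \<Rightarrow> (real \<Rightarrow> point)" where
  "polygonal_path [] = linepath 0 0"
| "polygonal_path [p] = linepath p p"
| "polygonal_path [p, q] = linepath p q"
| "polygonal_path (p # q # r # rest) = linepath p q +++ polygonal_path (q # r # rest)"

definition closed_polygon_path :: "point list \<Rightarrow> (real \<Rightarrow> point)" where
  "closed_polygon_path ps = polygonal_path (ps @ [hd ps])"

definition convex_polygon :: "point list \<Rightarrow> bool" where
  "convex_polygon ps \<longleftrightarrow> ps \<noteq> [] \<and>
     simple_path (closed_polygon_path ps) \<and>
     convex (inside (path_image (closed_polygon_path ps)))"

text \<open>A(x, y, sigma) = [p_1, ..., p_2k], with p_(2i+1) = (sigma_(2i+1) x_(i+1), 0)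
  and p_(2i) = (0, sigma_(2i) y_i); all vectors are 1-indexed.\<close>
definition alt_polygon :: "nat \<Rightarrow> (nat \<Rightarrow> real) \<Rightarrow> (nat \<Rightarrow> real) \<Rightarrow> (nat \<Rightarrow> real) \<Rightarrow> point list" where
  "alt_polygon k x y \<sigma> =
     map (\<lambda>j. if odd j then (\<sigma> j * x ((j + 1) div 2), 0) else (0, \<sigma> j * y (j div 2)))
         [1..<2 * k + 1]"

definition alternating_polygons :: "nat \<Rightarrow> point list set" where
  "alternating_polygons k =
     {alt_polygon k x y \<sigma> | x y \<sigma>.
        (\<forall>i\<in>{1..k}. x i > 0 \<and> y i > 0) \<and>
        inj_on x {1..k} \<and> inj_on y {1..k} \<and>
        (\<forall>j\<in>{1..2*k}. \<sigma> j = -1 \<or> \<sigma> j = 1)}"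

end

theory Submission
  imports Defs
begin

text \<open>
  The x-axis meets the alternating polygon exactly in its k vertices \<open>(\<plusminus>x\<^sub>i, 0)\<close>,
  which are distinct because the \<open>x\<^sub>i\<close> are. If the polygon is convex, the Jordan curve
  theorem puts the boundary into the closure of the convex interior. Were there three boundary
  points on the x-axis, then (as there are only finitely many) the axis would contain interior
  points on both sides of the middle one, and convexity of the interior would make the middle
  point interior as well, which is absurd.
\<close>

lemma pathstart_polygonal_path [simp]: "pathstart (polygonal_path (p # ps)) = p"
  by (induction ps arbitrary: p rule: induct_list012) simp_all

lemma pathfinish_polygonal_path [simp]: "pathfinish (polygonal_path (p # ps)) = last (p # ps)"
  by (induction ps arbitrary: p rule: induct_list012) simp_all

lemma vertices_subset_path_image_polygonal_path: "set ps \<subseteq> path_image (polygonal_path ps)"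
  by (induction ps rule: polygonal_path.induct) (auto simp: path_image_join)

lemma path_image_polygonal_path_subset_edges:
  assumes "2 \<le> length ps"
  shows "path_image (polygonal_path ps) \<subseteq> (\<Union>i<length ps - 1. closed_segment (ps ! i) (ps ! Suc i))"
  using assms
proof (induction ps rule: polygonal_path.induct)
  case (3 p q)
  then show ?case by force
next
  case (4 p q r ps)
  let ?qs = "q # r # ps"
  show ?case
  proof
    fix z
    assume "z \<in> path_image (polygonal_path (p # ?qs))"
    then consider "z \<in> closed_segment p q"
      | i where "i < length ?qs - 1" "z \<in> closed_segment (?qs ! i) (?qs ! Suc i)"
      using "4.IH" by (auto simp: path_image_join)
    then show "z \<in> (\<Union>i<length (p # ?qs) - 1. closed_segment ((p # ?qs) ! i) ((p # ?qs) ! Suc i))"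
    proof cases
      case 1
      then show ?thesis by (intro UN_I[of 0]) auto
    next
      case (2 i)
      then show ?thesis by (intro UN_I[of "Suc i"]) auto
    qed
  qed
qed auto

lemma pathfinish_closed_polygon_path:
  "pathfinish (closed_polygon_path ps) = pathstart (closed_polygon_path ps)"
  by (cases ps) (simp_all add: closed_polygon_path_def)

lemma vertices_subset_path_image_closed_polygon_path:
  "set ps \<subseteq> path_image (closed_polygon_path ps)"
  using vertices_subset_path_image_polygonal_path[of "ps @ [hd ps]"]
  by (auto simp: closed_polygon_path_def)

lemma path_image_closed_polygon_path_subset_edges:
  assumes "ps \<noteq> []"
  shows "path_image (closed_polygon_path ps)
    \<subseteq> (\<Union>i<length ps. closed_segment (ps ! i) (ps ! (Suc i mod length ps)))"
proof -
  have "(ps @ [hd ps]) ! Suc i = ps ! (Suc i mod length ps)" if "i < length ps" for i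
    using that assms by (cases "Suc i = length ps") (auto simp: nth_append hd_conv_nth)
  then have "(\<Union>i<length ps. closed_segment ((ps @ [hd ps]) ! i) ((ps @ [hd ps]) ! Suc i))
      = (\<Union>i<length ps. closed_segment (ps ! i) (ps ! (Suc i mod length ps)))"
    by (intro SUP_cong) (simp_all add: nth_append)
  then show ?thesis
    using path_image_polygonal_path_subset_edges[of "ps @ [hd ps]"] assms
    by (simp add: closed_polygon_path_def Suc_le_eq)
qed

lemma frontier_bijective_linear_image:
  fixes f :: "'a::euclidean_space \<Rightarrow> 'b::euclidean_space"
  assumes "linear f" "bij f"
  shows "frontier (f ` S) = f ` frontier S"
  using assms
  by (simp add: frontier_def closure_injective_linear_image interior_bijective_linear_image
      bij_is_inj image_set_diff)

lemma bounded_injective_linear_image_iff: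
  fixes f :: "'a::euclidean_space \<Rightarrow> 'b::euclidean_space"
  assumes "linear f" "inj f"
  shows "bounded (f ` S) \<longleftrightarrow> bounded S"
proof
  obtain g where "linear g" "g \<circ> f = id"
    using assms linear_injective_left_inverse by blast
  moreover assume "bounded (f ` S)"
  ultimately have "bounded (g ` f ` S)"
    by (simp add: bounded_linear_image linear_conv_bounded_linear)
  with \<open>g \<circ> f = id\<close> show "bounded S"
    by (simp add: image_comp)
qed (meson assms(1) bounded_linear_image linear_conv_bounded_linear)

lemma inside_bijective_linear_image:
  fixes f :: "'a::euclidean_space \<Rightarrow> 'b::euclidean_space"
  assumes f: "linear f" "bij f"
  shows "inside (f ` S) = f ` inside S"
proof -
  have inj: "inj f"
    using f(2) by (rule bij_is_inj)
  obtain g where "homeomorphism (f ` (-S)) (-S) g f"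
    using f(1) inj linear_homeomorphism_image by blast
  then have "homeomorphism (-S) (f ` (-S)) f g"
    by (rule homeomorphism_symD)
  then have hom: "homeomorphism (-S) (-(f ` S)) f g"
    by (simp only: bij_image_Compl_eq[OF f(2)])
  have pointwise: "f x \<in> inside (f ` S) \<longleftrightarrow> x \<in> inside S" for x
  proof (cases "x \<in> S")
    case True
    then show ?thesis
      by (simp add: inside_def)
  next
    case False
    then have "connected_component_set (-(f ` S)) (f x) = f ` connected_component_set (-S) x"
      using connected_component_set_homeomorphism[OF hom, of x] by simp
    moreover have "f x \<notin> f ` S"
      using False inj by (simp add: inj_image_mem_iff)
    ultimately show ?thesis
      using False f(1) inj by (simp add: inside_def bounded_injective_linear_image_iff)
  qed
  show ?thesis
  proof (rule set_eqI)
    fix z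
    obtain x where "z = f x"
      using f(2) by (metis bij_pointE)
    then show "z \<in> inside (f ` S) \<longleftrightarrow> z \<in> f ` inside S"
      using pointwise inj by (simp add: inj_image_mem_iff)
  qed
qed

lemma Jordan_frontier_inside:
  fixes c :: "real \<Rightarrow> 'a::euclidean_space"
  assumes "DIM('a) = 2" "simple_path c" "pathfinish c = pathstart c"
  shows "frontier (inside (path_image c)) = path_image c"
proof -
  \<comment> \<open>The library has the Jordan curve theorem for \<open>complex\<close> only; transport it.\<close>
  have "DIM('a) = DIM(complex)"
    using assms(1) by simp
  then obtain f :: "'a \<Rightarrow> complex" and g where f: "linear f" "\<And>x. g (f x) = x" "\<And>y. f (g y) = y"
    by (metis isomorphisms_UNIV_UNIV)
  then have "bij f"
    by (metis bijI')
  have "simple_path (f \<circ> c)"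
    using assms(2) f(1) \<open>bij f\<close> by (simp add: simple_path_linear_image_eq bij_is_inj)
  moreover have "pathfinish (f \<circ> c) = pathstart (f \<circ> c)"
    using assms(3) by (simp add: pathfinish_compose pathstart_compose)
  ultimately have "frontier (inside (f ` path_image c)) = f ` path_image c"
    using Jordan_inside_outside[of "f \<circ> c"] by (simp add: path_image_compose)
  then have "f ` frontier (inside (path_image c)) = f ` path_image c"
    using f(1) \<open>bij f\<close> by (simp add: inside_bijective_linear_image frontier_bijective_linear_image)
  then show ?thesis
    using \<open>bij f\<close> by (simp add: bij_is_inj inj_image_eq_iff)
qed

lemma convex_inside_x_axis_points_card_le_2:
  fixes C :: "(real \<times> real) set"
  assumes convex: "convex (inside C)" and C_closure: "C \<subseteq> closure (inside C)"
    and "closed C" and finite: "finite {t. (t, 0) \<in> C}"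
  shows "card {t. (t, 0) \<in> C} \<le> 2"
proof (rule ccontr)
  define T where "T = {t. (t, 0) \<in> C}"
  have "finite T"
    using finite by (simp add: T_def)
  assume "\<not> card {t. (t, 0) \<in> C} \<le> 2"
  moreover have "card {Min T, Max T} \<le> 2"
    by (cases "Min T = Max T") simp_all
  ultimately have "card {Min T, Max T} < card T"
    by (simp add: T_def)
  then have "\<not> T \<subseteq> {Min T, Max T}"
    using card_mono[of "{Min T, Max T}" T] by auto
  then obtain mid where mid: "mid \<in> T" "mid \<noteq> Min T" "mid \<noteq> Max T"
    by blast
  have lo: "Min T < mid" and hi: "mid < Max T"
    using Min_le[OF \<open>finite T\<close> \<open>mid \<in> T\<close>] Max_ge[OF \<open>finite T\<close> \<open>mid \<in> T\<close>] mid(2,3)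
    by linarith+
  have "Min T \<in> T" "Max T \<in> T"
    using \<open>finite T\<close> \<open>mid \<in> T\<close> by (auto intro: Min_in Max_in)
  have in_inside: "(t, 0) \<in> inside C" if "Min T \<le> t" "t \<le> Max T" "t \<notin> T" for t
  proof -
    have "closed_segment (Min T, 0) (Max T, 0) \<subseteq> closure (inside C)"
      using \<open>Min T \<in> T\<close> \<open>Max T \<in> T\<close> C_closure convex
      by (intro closed_segment_subset convex_closure) (auto simp: T_def)
    moreover have "(t, 0) \<in> closed_segment (Min T, 0) (Max T, 0)"
      using that by (simp add: closed_segment_same_snd closed_segment_eq_real_ivl)
    moreover have "closure (inside C) \<subseteq> inside C \<union> C"
      using frontier_inside_subset[OF \<open>closed C\<close>] closure_Un_frontier by blast
    ultimately show ?thesis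
      using that by (auto simp: T_def)
  qed
  have "{Min T<..<mid} - T \<noteq> {}" "{mid<..<Max T} - T \<noteq> {}"
    using lo hi \<open>finite T\<close> by (metis Diff_infinite_finite infinite_Ioo finite.emptyI)+
  then obtain t1 t2 where t1: "t1 \<in> {Min T<..<mid} - T" and t2: "t2 \<in> {mid<..<Max T} - T"
    by blast
  then have "closed_segment (t1, 0) (t2, 0) \<subseteq> inside C"
    using convex in_inside by (intro closed_segment_subset) auto
  moreover have "(mid, 0) \<in> closed_segment (t1, 0) (t2, (0::real))"
    using t1 t2 by (simp add: closed_segment_same_snd closed_segment_eq_real_ivl)
  ultimately have "(mid, 0) \<in> inside C"
    by blast
  moreover have "(mid, 0) \<in> C"
    using \<open>mid \<in> T\<close> by (simp add: T_def)
  ultimately show False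
    using inside_no_overlap[of C] by blast
qed

definition alt_vertex :: "(nat \<Rightarrow> real) \<Rightarrow> (nat \<Rightarrow> real) \<Rightarrow> (nat \<Rightarrow> real) \<Rightarrow> nat \<Rightarrow> point" where
  "alt_vertex x y \<sigma> j = (if odd j then (\<sigma> j * x ((j + 1) div 2), 0) else (0, \<sigma> j * y (j div 2)))"

lemma length_alt_polygon [simp]: "length (alt_polygon k x y \<sigma>) = 2 * k"
  by (simp add: alt_polygon_def)

lemma nth_alt_polygon: "i < 2 * k \<Longrightarrow> alt_polygon k x y \<sigma> ! i = alt_vertex x y \<sigma> (Suc i)"
  by (simp add: alt_polygon_def alt_vertex_def del: upt_Suc)

lemma alt_vertex_in_alt_polygon:
  assumes "j \<in> {1..2 * k}"
  shows "alt_vertex x y \<sigma> j \<in> set (alt_polygon k x y \<sigma>)"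
  using assms nth_alt_polygon[of "j - 1" k x y \<sigma>] nth_mem[of "j - 1" "alt_polygon k x y \<sigma>"]
  by auto

lemma x_axis_point_of_segment_to_y_axis:
  fixes a b :: "real \<times> real"
  assumes "snd a = 0" "fst b = 0" "snd b \<noteq> 0" "(t, 0) \<in> closed_segment a b"
  shows "(t, 0) = a"
proof -
  obtain u where u: "(t, 0) = (1 - u) *\<^sub>R a + u *\<^sub>R b"
    using assms(4) by (auto simp: closed_segment_def)
  then have "0 = snd ((1 - u) *\<^sub>R a + u *\<^sub>R b)"
    by (metis snd_conv)
  also have "\<dots> = u * snd b"
    using assms(1) by simp
  finally have "u = 0"
    using assms(3) by simp
  with u show ?thesis
    by simp
qed

lemma edge_of_alt_polygon:
  assumes "i < 2 * k"
  obtains m m' where "m \<in> {1..2 * k}" "m' \<in> {1..2 * k}" "odd m" "even m'"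
    "closed_segment (alt_polygon k x y \<sigma> ! i) (alt_polygon k x y \<sigma> ! (Suc i mod (2 * k)))
      = closed_segment (alt_vertex x y \<sigma> m) (alt_vertex x y \<sigma> m')"
proof -
  define j j' where "j = Suc i" and "j' = Suc (Suc i mod (2 * k))"
  have "Suc i mod (2 * k) < 2 * k"
    using assms by simp
  then have "j' \<in> {1..2 * k}"
    unfolding j'_def atLeastAtMost_iff by linarith
  moreover have "j \<in> {1..2 * k}"
    using assms by (simp add: j_def)
  moreover have "even j' \<longleftrightarrow> odd j"
    using dvd_mod_iff[of 2 "2 * k" "Suc i"] by (simp add: j_def j'_def)
  moreover have "closed_segment (alt_polygon k x y \<sigma> ! i) (alt_polygon k x y \<sigma> ! (Suc i mod (2 * k)))
      = closed_segment (alt_vertex x y \<sigma> j) (alt_vertex x y \<sigma> j')"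
    using assms by (simp add: j_def j'_def nth_alt_polygon)
  ultimately show thesis
    using that[of j j'] that[of j' j] by (metis closed_segment_commute)
qed

lemma x_axis_points_alt_polygon:
  assumes "1 \<le> k" "\<forall>i\<in>{1..k}. y i \<noteq> 0" "\<forall>j\<in>{1..2 * k}. \<sigma> j \<noteq> 0"
  shows "{t. (t, 0) \<in> path_image (closed_polygon_path (alt_polygon k x y \<sigma>))}
    = (\<lambda>i. \<sigma> (2 * i - 1) * x i) ` {1..k}"
proof (intro equalityI subsetI)
  let ?P = "alt_polygon k x y \<sigma>" and ?v = "alt_vertex x y \<sigma>"
  fix t
  assume "t \<in> {t. (t, 0) \<in> path_image (closed_polygon_path ?P)}"
  moreover have "?P \<noteq> []"
    using assms(1) by (simp flip: length_greater_0_conv)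
  ultimately obtain i where "i < 2 * k" and edge: "(t, 0) \<in> closed_segment (?P ! i) (?P ! (Suc i mod (2 * k)))"
    using path_image_closed_polygon_path_subset_edges[of ?P] by auto
  obtain m m' where m: "m \<in> {1..2 * k}" "odd m" and m': "m' \<in> {1..2 * k}" "even m'"
    and "closed_segment (?P ! i) (?P ! (Suc i mod (2 * k))) = closed_segment (?v m) (?v m')"
    using \<open>i < 2 * k\<close> by (rule edge_of_alt_polygon)
  with edge have "(t, 0) \<in> closed_segment (?v m) (?v m')"
    by simp
  moreover have "snd (?v m) = 0" "fst (?v m') = 0" "snd (?v m') \<noteq> 0"
    using m m' assms(2,3) by (auto simp: alt_vertex_def)
  ultimately have "(t, 0) = ?v m"
    by (intro x_axis_point_of_segment_to_y_axis)
  then have "t = \<sigma> m * x ((m + 1) div 2)"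
    using \<open>odd m\<close> by (simp add: alt_vertex_def)
  moreover obtain b where "m = 2 * b + 1"
    using \<open>odd m\<close> by (rule oddE)
  moreover have "b + 1 \<in> {1..k}"
    using \<open>m \<in> {1..2 * k}\<close> \<open>m = 2 * b + 1\<close> by simp
  ultimately show "t \<in> (\<lambda>i. \<sigma> (2 * i - 1) * x i) ` {1..k}"
    by (intro image_eqI[of _ _ "b + 1"]) simp_all
next
  fix t
  assume "t \<in> (\<lambda>i. \<sigma> (2 * i - 1) * x i) ` {1..k}"
  then obtain i where "i \<in> {1..k}" "t = \<sigma> (2 * i - 1) * x i"
    by blast
  then have "(t, 0) = alt_vertex x y \<sigma> (2 * i - 1)" "2 * i - 1 \<in> {1..2 * k}"
    by (auto simp: alt_vertex_def)
  then have "(t, 0) \<in> set (alt_polygon k x y \<sigma>)"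
    by (simp add: alt_vertex_in_alt_polygon)
  then show "t \<in> {t. (t, 0) \<in> path_image (closed_polygon_path (alt_polygon k x y \<sigma>))}"
    using vertices_subset_path_image_closed_polygon_path by blast
qed

lemma inj_on_signed_coordinates:
  fixes x \<sigma> :: "nat \<Rightarrow> real"
  assumes "inj_on x A" "\<forall>i\<in>A. x i > 0" "\<forall>i\<in>A. \<sigma> (f i) = -1 \<or> \<sigma> (f i) = 1"
  shows "inj_on (\<lambda>i. \<sigma> (f i) * x i) A"
proof (rule inj_onI)
  have abs_eq: "\<bar>\<sigma> (f i) * x i\<bar> = x i" if "i \<in> A" for i
  proof -
    have "\<sigma> (f i) = -1 \<or> \<sigma> (f i) = 1" "x i > 0"
      using that assms(2,3) by auto
    then show ?thesis
      by auto
  qed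
  fix i j
  assume "i \<in> A" "j \<in> A" "\<sigma> (f i) * x i = \<sigma> (f j) * x j"
  then have "x i = x j"
    using abs_eq by metis
  then show "i = j"
    using inj_onD[OF assms(1)] \<open>i \<in> A\<close> \<open>j \<in> A\<close> by blast
qed

lemma lemma1:
  fixes k :: nat and P :: "point list"
  assumes "k \<ge> 1"
    and "P \<in> alternating_polygons k"
    and "convex_polygon P"
  shows "k \<le> 2"
proof -
  obtain x y \<sigma> where P: "P = alt_polygon k x y \<sigma>" and pos: "\<forall>i\<in>{1..k}. x i > 0 \<and> y i > 0"
    and "inj_on x {1..k}" and sign: "\<forall>j\<in>{1..2 * k}. \<sigma> j = -1 \<or> \<sigma> j = 1"
    using assms(2) unfolding alternating_polygons_def by blast
  define C where "C = path_image (closed_polygon_path P)"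
  have "simple_path (closed_polygon_path P)" and convex: "convex (inside C)"
    using assms(3) by (simp_all add: convex_polygon_def C_def)
  then have "frontier (inside C) = C" and "closed C"
    using Jordan_frontier_inside[of "closed_polygon_path P"] pathfinish_closed_polygon_path
    by (simp_all add: C_def closed_path_image simple_path_imp_path)
  then have "C \<subseteq> closure (inside C)"
    by (metis Diff_subset frontier_def)
  have "\<forall>i\<in>{1..k}. y i \<noteq> 0" "\<forall>j\<in>{1..2 * k}. \<sigma> j \<noteq> 0"
    using pos sign by auto
  then have x_axis_points: "{t. (t, 0) \<in> C} = (\<lambda>i. \<sigma> (2 * i - 1) * x i) ` {1..k}"
    using x_axis_points_alt_polygon[OF assms(1)] by (simp only: C_def P)
  have "2 * i - 1 \<in> {1..2 * k}" if "i \<in> {1..k}" for i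
    using that by auto
  then have "\<forall>i\<in>{1..k}. \<sigma> (2 * i - 1) = -1 \<or> \<sigma> (2 * i - 1) = 1"
    using sign by blast
  then have "inj_on (\<lambda>i. \<sigma> (2 * i - 1) * x i) {1..k}"
    using \<open>inj_on x {1..k}\<close> pos by (intro inj_on_signed_coordinates) auto
  then have "card {t. (t, 0) \<in> C} = k" and "finite {t. (t, 0) \<in> C}"
    by (simp_all add: x_axis_points card_image)
  then show ?thesis
    using convex_inside_x_axis_points_card_le_2[OF convex \<open>C \<subseteq> closure (inside C)\<close> \<open>closed C\<close>] by simp
qed

end
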